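(* Let $k>3$, $r>0$, $\Phi=(\varphi_p)_{p\ge1}$ a complete orthonormal system of $H^r(\mathbb T^2)$, and $F:H^r(\mathbb T^2)\to H^k(\mathbb T^2)$ a bounded linear operator. There is a constant $C>0$ not depending on $n$ such that for $\mathcal T\in\{(ij,ik),(ik,jk)\}$, $$\sup_{u\in\mathbb T^n}|c^{\mathcal T}_n(\Phi,F,u)|\le C\,S_n^{\mathcal T}\,\|F\|^2_{\mathcal L(H^r,H^k)}.$$
   Context: $\mathbb T=\mathbb R/2\pi\mathbb Z$; $H^s(\mathbb T^2)$ is the $L^2$-Sobolev space of order $s$. For $n\ge2$, $p_n\in(0,1]$, $\xi^{(n)}_{ij}\in\{0,1\}$, $\hat\xi_{ij}=\xi^{(n)}_{ij}/p_n-1$. For $u=(u_1,\dots,u_n)\in\mathbb T^n$: $c^{(ij,ik)}_n(\Phi,F,u)=\frac1{n^3}\sum_{i,j,k=1}^n\hat\xi_{ij}\hat\xi_{ik}\sum_{p\ge1}\partial_{\theta_1}F(\varphi_p)(u_i,u_j)\,\overline{\partial_{\theta_1}F(\varphi_p)(u_i,u_k)}$, $c^{(ik,jk)}_n(\Phi,F,u)=\frac1{n^3}\sum_{i,j,k}\hat\xi_{ik}\hat\xi_{jk}\sum_{p\ge1}\partial_{\theta_1}F(\varphi_p)(u_i,u_k)\,\overline{\partial_{\theta_1}F(\varphi_p)(u_j,u_k)}$. $S_n^{(ij,ik)}=\sup_{r,s,t\in\{\pm1\}^n}|\frac1{n^3}\sum_{i,j,k}\hat\xi_{ij}\hat\xi_{ik}r_is_jt_k|$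 and $S_n^{(ik,jk)}=\sup_{r,s,t\in\{\pm1\}^n}|\frac1{n^3}\sum_{i,j,k}\hat\xi_{ik}\hat\xi_{jk}r_is_jt_k|$. *)

theory Defs
  imports "HOL-Analysis.Analysis"
begin

text \<open>Elements of the Sobolev space H^s(T^2) of complex-valued functions on the
  2-torus are represented by their Fourier coefficients
  f(theta) = sum over m in Z^2 of c_m exp(i m.theta), with the standard norm
  sum over m of (1 + |m|^2)^s |c_m|^2.\<close>

type_synonym fourier2 = "int \<times> int \<Rightarrow> complex"

definition sob_weight :: "real \<Rightarrow> int \<times> int \<Rightarrow> real" where
  "sob_weight s m = (1 + (real_of_int (fst m))\<^sup>2 + (real_of_int (snd m))\<^sup>2) powr s"

definition in_H :: "real \<Rightarrow> fourier2 \<Rightarrow> bool" where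
  "in_H s f \<longleftrightarrow> (\<lambda>m. sob_weight s m * (cmod (f m))\<^sup>2) summable_on UNIV"

definition H_inner :: "real \<Rightarrow> fourier2 \<Rightarrow> fourier2 \<Rightarrow> complex" where
  "H_inner s f g = (\<Sum>\<^sub>\<infinity>m. complex_of_real (sob_weight s m) * f m * cnj (g m))"

definition H_norm :: "real \<Rightarrow> fourier2 \<Rightarrow> real" where
  "H_norm s f = sqrt (\<Sum>\<^sub>\<infinity>m. sob_weight s m * (cmod (f m))\<^sup>2)"

definition complete_orthonormal_system :: "real \<Rightarrow> (nat \<Rightarrow> fourier2) \<Rightarrow> bool" where
  "complete_orthonormal_system r \<Phi> \<longleftrightarrow>
     (\<forall>p\<ge>1. in_H r (\<Phi> p)) \<and>
     (\<forall>p\<ge>1. \<forall>q\<ge>1. H_inner r (\<Phi> p) (\<Phi> q) = (if p = q then 1 else 0)) \<and>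
     (\<forall>f. in_H r f \<and> (\<forall>p\<ge>1. H_inner r f (\<Phi> p) = 0) \<longrightarrow> f = (\<lambda>_. 0))"

definition bounded_linear_op :: "real \<Rightarrow> real \<Rightarrow> (fourier2 \<Rightarrow> fourier2) \<Rightarrow> bool" where
  "bounded_linear_op r k F \<longleftrightarrow>
     (\<forall>f. in_H r f \<longrightarrow> in_H k (F f)) \<and>
     (\<forall>f g. in_H r f \<and> in_H r g \<longrightarrow> F (\<lambda>m. f m + g m) = (\<lambda>m. F f m + F g m)) \<and>
     (\<forall>c f. in_H r f \<longrightarrow> F (\<lambda>m. c * f m) = (\<lambda>m. c * F f m)) \<and>
     (\<exists>B. \<forall>f. in_H r f \<longrightarrow> H_norm k (F f) \<le> B * H_norm r f)"

definition op_norm :: "real \<Rightarrow> real \<Rightarrow> (fourier2 \<Rightarrow> fourier2) \<Rightarrow> real" where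
  "op_norm r k F = Sup {H_norm k (F f) | f. in_H r f \<and> H_norm r f \<le> 1}"

definition dtheta1 :: "fourier2 \<Rightarrow> real \<Rightarrow> real \<Rightarrow> complex" where
  "dtheta1 f x y = (\<Sum>\<^sub>\<infinity>m. (\<i> * of_int (fst m)) * f m *
       exp (\<i> * complex_of_real (real_of_int (fst m) * x + real_of_int (snd m) * y)))"

definition xihat :: "real \<Rightarrow> (nat \<Rightarrow> nat \<Rightarrow> real) \<Rightarrow> nat \<Rightarrow> nat \<Rightarrow> real" where
  "xihat pn \<xi> i j = \<xi> i j / pn - 1"

definition kern :: "(nat \<Rightarrow> fourier2) \<Rightarrow> (fourier2 \<Rightarrow> fourier2) \<Rightarrow> real \<Rightarrow> real \<Rightarrow> real \<Rightarrow> real \<Rightarrow> complex" where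
  "kern \<Phi> F a b c d = (\<Sum>\<^sub>\<infinity>p\<in>{1..}. dtheta1 (F (\<Phi> p)) a b * cnj (dtheta1 (F (\<Phi> p)) c d))"

text \<open>Indices i, j, k range over {0..<n} (instead of {1..n}).\<close>
definition c_ij_ik :: "nat \<Rightarrow> real \<Rightarrow> (nat \<Rightarrow> nat \<Rightarrow> real) \<Rightarrow> (nat \<Rightarrow> fourier2) \<Rightarrow> (fourier2 \<Rightarrow> fourier2) \<Rightarrow> (nat \<Rightarrow> real) \<Rightarrow> complex" where
  "c_ij_ik n pn \<xi> \<Phi> F u = (1 / of_nat n ^ 3) *
     (\<Sum>i<n. \<Sum>j<n. \<Sum>k<n. complex_of_real (xihat pn \<xi> i j * xihat pn \<xi> i k) *
        kern \<Phi> F (u i) (u j) (u i) (u k))"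

definition c_ik_jk :: "nat \<Rightarrow> real \<Rightarrow> (nat \<Rightarrow> nat \<Rightarrow> real) \<Rightarrow> (nat \<Rightarrow> fourier2) \<Rightarrow> (fourier2 \<Rightarrow> fourier2) \<Rightarrow> (nat \<Rightarrow> real) \<Rightarrow> complex" where
  "c_ik_jk n pn \<xi> \<Phi> F u = (1 / of_nat n ^ 3) *
     (\<Sum>i<n. \<Sum>j<n. \<Sum>k<n. complex_of_real (xihat pn \<xi> i k * xihat pn \<xi> j k) *
        kern \<Phi> F (u i) (u k) (u j) (u k))"

definition signs :: "nat \<Rightarrow> (nat \<Rightarrow> real) set" where
  "signs n = {r. \<forall>i. r i \<in> {-1, 1} \<and> (i \<ge> n \<longrightarrow> r i = 1)}"

definition S_ij_ik :: "nat \<Rightarrow> real \<Rightarrow> (nat \<Rightarrow> nat \<Rightarrow> real) \<Rightarrow> real" where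
  "S_ij_ik n pn \<xi> = Sup {\<bar>(1 / real n ^ 3) *
      (\<Sum>i<n. \<Sum>j<n. \<Sum>k<n. xihat pn \<xi> i j * xihat pn \<xi> i k * r i * s j * t k)\<bar>
      | r s t. r \<in> signs n \<and> s \<in> signs n \<and> t \<in> signs n}"

definition S_ik_jk :: "nat \<Rightarrow> real \<Rightarrow> (nat \<Rightarrow> nat \<Rightarrow> real) \<Rightarrow> real" where
  "S_ik_jk n pn \<xi> = Sup {\<bar>(1 / real n ^ 3) *
      (\<Sum>i<n. \<Sum>j<n. \<Sum>k<n. xihat pn \<xi> i k * xihat pn \<xi> j k * r i * s j * t k)\<bar>
      | r s t. r \<in> signs n \<and> s \<in> signs n \<and> t \<in> signs n}"

end

theory Submission
  imports Defs
begin

text \<open>Write \<open>\<partial>\<^sub>1 F(\<phi>\<^sub>p)(x, y) = \<Sum>\<^sub>m \<beta>\<^sub>p(m) e(m\<^sub>1 x) e(m\<^sub>2 y)\<close> with \<open>e(t) = exp(i t)\<close> and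
  \<open>\<beta>\<^sub>p(m) = i m\<^sub>1 F(\<phi>\<^sub>p)\<^sub>m\<close>.
  Then \<open>c\<^sub>n\<close> is a sum over \<open>p\<close>, \<open>m\<close>, \<open>m'\<close> of \<open>\<beta>\<^sub>p(m) conj \<beta>\<^sub>p(m')\<close> times a trilinear form in
  unimodular complex vectors whose coefficients are those defining \<open>S\<^sub>n\<close>. Splitting into real and
  imaginary parts and using that a real trilinear form is maximised on the cube at sign vectors,
  this form is at most \<open>8 n\<^sup>3 S\<^sub>n\<close>. It remains to bound \<open>\<Sum>\<^sub>p (\<Sum>\<^sub>m |\<beta>\<^sub>p(m)|)\<^sup>2\<close>: Cauchy--Schwarz with
  the weight \<open>w\<^sub>k(m)\<^sup>1\<^sup>/\<^sup>2\<close> and Bessel's inequality \<open>w\<^sub>k(m) \<Sum>\<^sub>p |F(\<phi>\<^sub>p)\<^sub>m|\<^sup>2 \<le> \<parallel>F\<parallel>\<^sup>2\<close> give the bound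
  \<open>\<parallel>F\<parallel>\<^sup>2 D\<^sup>2\<close> with \<open>D = \<Sum>\<^sub>m |m\<^sub>1| w\<^sub>k(m)\<^sup>-\<^sup>1\<^sup>/\<^sup>2\<close>, which is finite because \<open>k > 3\<close>.\<close>

section \<open>Trilinear forms at sign vectors\<close>

definition sign_vector :: "nat \<Rightarrow> (nat \<Rightarrow> real) \<Rightarrow> nat \<Rightarrow> real" where
  "sign_vector n A i = (if i < n \<and> A i < 0 then -1 else 1)"

lemma sign_vector_in_signs: "sign_vector n A \<in> signs n"
  by (auto simp: signs_def sign_vector_def)

lemma one_in_signs: "(\<lambda>_. 1) \<in> signs n"
  by (simp add: signs_def)

lemma abs_le_one_if_signs: "r \<in> signs n \<Longrightarrow> \<bar>r i\<bar> \<le> 1"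
  by (auto simp: signs_def) (metis abs_1 abs_minus_cancel order_refl)

lemma sum_mult_le_sign_vector:
  assumes "\<forall>i<n. \<bar>x i\<bar> \<le> 1"
  shows "(\<Sum>i<n. x i * A i) \<le> (\<Sum>i<n. sign_vector n A i * A i)"
proof (rule sum_mono)
  fix i assume "i \<in> {..<n}"
  with assms have "i < n" "-1 \<le> x i" "x i \<le> 1" by auto
  then show "x i * A i \<le> sign_vector n A i * A i"
    using mult_right_mono_neg[of "-1" "x i" "A i"] mult_right_mono[of "x i" 1 "A i"]
    by (cases "A i < 0") (auto simp: sign_vector_def)
qed

text \<open>Being affine in each variable separately, a trilinear form attains the maximum of its
  absolute value over the cube at a vertex; the vertex is found one coordinate vector at a time.\<close>

lemma trilinear_form_le_at_signs:
  fixes a :: "nat \<Rightarrow> nat \<Rightarrow> nat \<Rightarrow> real"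
  assumes x: "\<forall>i<n. \<bar>x i\<bar> \<le> 1" and y: "\<forall>i<n. \<bar>y i\<bar> \<le> 1" and z: "\<forall>i<n. \<bar>z i\<bar> \<le> 1"
  obtains r s t where "r \<in> signs n" "s \<in> signs n" "t \<in> signs n"
    "\<bar>\<Sum>i<n. \<Sum>j<n. \<Sum>k<n. a i j k * x i * y j * z k\<bar> \<le>
     \<bar>\<Sum>i<n. \<Sum>j<n. \<Sum>k<n. a i j k * r i * s j * t k\<bar>"
proof -
  define T where "T = (\<lambda>x y z. \<Sum>i<n. \<Sum>j<n. \<Sum>k<n. a i j k * x i * y j * z k)"
  have T_fst: "T x y z = (\<Sum>i<n. x i * (\<Sum>j<n. \<Sum>k<n. a i j k * y j * z k))" for x y z
    by (simp add: T_def sum_distrib_left algebra_simps)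
  have T_snd: "T x y z = (\<Sum>j<n. y j * (\<Sum>i<n. \<Sum>k<n. a i j k * x i * z k))" for x y z
    unfolding T_def sum_distrib_left by (subst sum.swap) (simp add: algebra_simps)
  have T_thd: "T x y z = (\<Sum>k<n. z k * (\<Sum>i<n. \<Sum>j<n. a i j k * x i * y j))" for x y z
  proof -
    have "T x y z = (\<Sum>i<n. \<Sum>k<n. \<Sum>j<n. a i j k * x i * y j * z k)"
      unfolding T_def by (rule sum.cong[OF refl]) (rule sum.swap)
    also have "\<dots> = (\<Sum>k<n. \<Sum>i<n. \<Sum>j<n. a i j k * x i * y j * z k)"
      by (rule sum.swap)
    finally show ?thesis by (simp add: sum_distrib_left algebra_simps)
  qed
  define \<sigma> :: real where "\<sigma> = (if T x y z < 0 then -1 else 1)"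
  define x' where "x' = (\<lambda>i. \<sigma> * x i)"
  have x': "\<forall>i<n. \<bar>x' i\<bar> \<le> 1" using x by (auto simp: x'_def \<sigma>_def abs_mult)
  define r where "r = sign_vector n (\<lambda>i. \<Sum>j<n. \<Sum>k<n. a i j k * y j * z k)"
  define s where "s = sign_vector n (\<lambda>j. \<Sum>i<n. \<Sum>k<n. a i j k * r i * z k)"
  define t where "t = sign_vector n (\<lambda>k. \<Sum>i<n. \<Sum>j<n. a i j k * r i * s j)"
  have "\<bar>T x y z\<bar> = T x' y z"
    by (simp add: T_def x'_def \<sigma>_def sum_distrib_left[symmetric] algebra_simps sum_negf)
  also have "\<dots> \<le> T r y z" unfolding T_fst r_def by (rule sum_mult_le_sign_vector[OF x'])
  also have "\<dots> \<le> T r s z" unfolding T_snd s_def by (rule sum_mult_le_sign_vector[OF y])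
  also have "\<dots> \<le> T r s t" unfolding T_thd t_def by (rule sum_mult_le_sign_vector[OF z])
  also have "\<dots> \<le> \<bar>T r s t\<bar>" by simp
  finally show ?thesis
    using that[of r s t] unfolding T_def r_def s_def t_def by (simp add: sign_vector_in_signs)
qed

definition sign_norm :: "nat \<Rightarrow> (nat \<Rightarrow> nat \<Rightarrow> nat \<Rightarrow> real) \<Rightarrow> real" where
  "sign_norm n a = Sup {\<bar>(1 / real n ^ 3) * (\<Sum>i<n. \<Sum>j<n. \<Sum>k<n. a i j k * r i * s j * t k)\<bar>
      | r s t. r \<in> signs n \<and> s \<in> signs n \<and> t \<in> signs n}"

lemma S_ij_ik_eq_sign_norm:
  "S_ij_ik n pn \<xi> = sign_norm n (\<lambda>i j k. xihat pn \<xi> i j * xihat pn \<xi> i k)"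
  by (simp add: S_ij_ik_def sign_norm_def)

lemma S_ik_jk_eq_sign_norm:
  "S_ik_jk n pn \<xi> = sign_norm n (\<lambda>i j k. xihat pn \<xi> i k * xihat pn \<xi> j k)"
  by (simp add: S_ik_jk_def sign_norm_def)

lemma abs_trilinear_at_signs_le:
  assumes "r \<in> signs n" "s \<in> signs n" "t \<in> signs n"
  shows "\<bar>\<Sum>i<n. \<Sum>j<n. \<Sum>k<n. a i j k * r i * s j * t k\<bar> \<le> (\<Sum>i<n. \<Sum>j<n. \<Sum>k<n. \<bar>a i j k\<bar>)"
proof -
  have term_le: "\<bar>a i j k * r i * s j * t k\<bar> \<le> \<bar>a i j k\<bar>" for i j k
  proof -
    have "\<bar>r i\<bar> * \<bar>s j\<bar> * \<bar>t k\<bar> \<le> 1"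
      using assms by (intro mult_le_one abs_le_one_if_signs) auto
    then show ?thesis by (simp add: abs_mult mult_left_le mult.assoc)
  qed
  show ?thesis
    by (rule order_trans[OF sum_abs], rule sum_mono, rule order_trans[OF sum_abs], rule sum_mono,
        rule order_trans[OF sum_abs], rule sum_mono, rule term_le)
qed

lemma sign_norm_upper:
  assumes "r \<in> signs n" "s \<in> signs n" "t \<in> signs n"
  shows "\<bar>(1 / real n ^ 3) * (\<Sum>i<n. \<Sum>j<n. \<Sum>k<n. a i j k * r i * s j * t k)\<bar> \<le> sign_norm n a"
  unfolding sign_norm_def
proof (rule cSup_upper)
  show "bdd_above {\<bar>(1 / real n ^ 3) * (\<Sum>i<n. \<Sum>j<n. \<Sum>k<n. a i j k * r i * s j * t k)\<bar>
      | r s t. r \<in> signs n \<and> s \<in> signs n \<and> t \<in> signs n}"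
  proof (rule bdd_aboveI)
    fix y assume "y \<in> {\<bar>(1 / real n ^ 3) * (\<Sum>i<n. \<Sum>j<n. \<Sum>k<n. a i j k * r i * s j * t k)\<bar>
      | r s t. r \<in> signs n \<and> s \<in> signs n \<and> t \<in> signs n}"
    then obtain r s t where y: "y = \<bar>\<Sum>i<n. \<Sum>j<n. \<Sum>k<n. a i j k * r i * s j * t k\<bar> / real n ^ 3"
      and "r \<in> signs n" "s \<in> signs n" "t \<in> signs n"
      by (auto simp: abs_mult)
    then show "y \<le> (\<Sum>i<n. \<Sum>j<n. \<Sum>k<n. \<bar>a i j k\<bar>) / real n ^ 3"
      by (auto intro: divide_right_mono abs_trilinear_at_signs_le)
  qed
qed (use assms in blast)

lemma sign_norm_nonneg: "0 \<le> sign_norm n a"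
  using sign_norm_upper[OF one_in_signs one_in_signs one_in_signs] by (rule order_trans[rotated]) simp

lemma trilinear_form_le_sign_norm:
  assumes "n > 0" "\<forall>i<n. \<bar>x i\<bar> \<le> 1" "\<forall>i<n. \<bar>y i\<bar> \<le> 1" "\<forall>i<n. \<bar>z i\<bar> \<le> 1"
  shows "\<bar>\<Sum>i<n. \<Sum>j<n. \<Sum>k<n. a i j k * x i * y j * z k\<bar> \<le> real n ^ 3 * sign_norm n a"
proof -
  obtain r s t where rst: "r \<in> signs n" "s \<in> signs n" "t \<in> signs n"
    and le: "\<bar>\<Sum>i<n. \<Sum>j<n. \<Sum>k<n. a i j k * x i * y j * z k\<bar> \<le>
             \<bar>\<Sum>i<n. \<Sum>j<n. \<Sum>k<n. a i j k * r i * s j * t k\<bar>"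
    using trilinear_form_le_at_signs[OF assms(2-4)] .
  note le
  also have "\<dots> = real n ^ 3 * \<bar>(1 / real n ^ 3) * (\<Sum>i<n. \<Sum>j<n. \<Sum>k<n. a i j k * r i * s j * t k)\<bar>"
    using assms(1) by (simp add: abs_mult)
  also have "\<dots> \<le> real n ^ 3 * sign_norm n a"
    by (intro mult_left_mono sign_norm_upper rst) auto
  finally show ?thesis .
qed

text \<open>The complex form splits into eight real trilinear forms in the real and imaginary parts.\<close>

lemma complex_trilinear_form_le_sign_norm:
  fixes A B C :: "nat \<Rightarrow> complex"
  assumes n: "n > 0"
    and A: "\<forall>i<n. cmod (A i) \<le> 1" and B: "\<forall>i<n. cmod (B i) \<le> 1" and C: "\<forall>i<n. cmod (C i) \<le> 1"
  shows "cmod (\<Sum>i<n. \<Sum>j<n. \<Sum>k<n. complex_of_real (a i j k) * A i * B j * C k)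
           \<le> 8 * (real n ^ 3 * sign_norm n a)"
proof -
  define T where "T = (\<lambda>x y z. \<Sum>i<n. \<Sum>j<n. \<Sum>k<n. a i j k * x i * y j * z k)"
  define M where "M = real n ^ 3 * sign_norm n a"
  have parts: "\<forall>i<n. \<bar>f (X i)\<bar> \<le> 1" if "f = Re \<or> f = Im" "\<forall>i<n. cmod (X i) \<le> 1" for f X
    using that abs_Re_le_cmod abs_Im_le_cmod order_trans by metis
  have T_le: "\<bar>T (\<lambda>i. f (A i)) (\<lambda>i. g (B i)) (\<lambda>i. h (C i))\<bar> \<le> M"
    if "f = Re \<or> f = Im" "g = Re \<or> g = Im" "h = Re \<or> h = Im" for f g h
    unfolding T_def M_def
    by (rule trilinear_form_le_sign_norm[OF n]) (use that parts A B C in presburger)+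
  let ?Z = "\<Sum>i<n. \<Sum>j<n. \<Sum>k<n. complex_of_real (a i j k) * A i * B j * C k"
  have Re: "Re ?Z = T (\<lambda>i. Re (A i)) (\<lambda>i. Re (B i)) (\<lambda>i. Re (C i))
      - T (\<lambda>i. Re (A i)) (\<lambda>i. Im (B i)) (\<lambda>i. Im (C i))
      - T (\<lambda>i. Im (A i)) (\<lambda>i. Re (B i)) (\<lambda>i. Im (C i))
      - T (\<lambda>i. Im (A i)) (\<lambda>i. Im (B i)) (\<lambda>i. Re (C i))"
    unfolding T_def by (simp add: sum_subtractf[symmetric] algebra_simps)
  have Im: "Im ?Z = T (\<lambda>i. Im (A i)) (\<lambda>i. Re (B i)) (\<lambda>i. Re (C i))
      + T (\<lambda>i. Re (A i)) (\<lambda>i. Im (B i)) (\<lambda>i. Re (C i))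
      + T (\<lambda>i. Re (A i)) (\<lambda>i. Re (B i)) (\<lambda>i. Im (C i))
      - T (\<lambda>i. Im (A i)) (\<lambda>i. Im (B i)) (\<lambda>i. Im (C i))"
    unfolding T_def by (simp add: sum_subtractf[symmetric] sum.distrib[symmetric] algebra_simps)
  have "cmod ?Z \<le> \<bar>Re ?Z\<bar> + \<bar>Im ?Z\<bar>" by (rule cmod_le)
  also have "\<dots> \<le> 8 * M"
    unfolding Re Im
    using T_le[of Re Re Re] T_le[of Re Im Im] T_le[of Im Re Im] T_le[of Im Im Re]
      T_le[of Im Re Re] T_le[of Re Im Re] T_le[of Re Re Im] T_le[of Im Im Im]
    by simp linarith
  finally show ?thesis by (simp add: M_def)
qed

section \<open>Finite combinations of unconditional sums\<close>

lemma has_sum_sum: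
  fixes f :: "'i \<Rightarrow> 'a \<Rightarrow> 'b::topological_comm_monoid_add"
  assumes "finite I" "\<And>x. x \<in> I \<Longrightarrow> (f x has_sum s x) A"
  shows "((\<lambda>m. \<Sum>x\<in>I. f x m) has_sum (\<Sum>x\<in>I. s x)) A"
  using assms by (induction I rule: finite_induct) (auto intro: has_sum_add)

lemma summable_on_sum:
  fixes f :: "'i \<Rightarrow> 'a \<Rightarrow> 'b::topological_comm_monoid_add"
  assumes "finite I" "\<And>x. x \<in> I \<Longrightarrow> f x summable_on A"
  shows "(\<lambda>m. \<Sum>x\<in>I. f x m) summable_on A"
proof -
  obtain s where "\<And>x. x \<in> I \<Longrightarrow> (f x has_sum s x) A"
    using assms(2) unfolding summable_on_def by metis
  then show ?thesis using has_sum_sum[OF assms(1)] unfolding summable_on_def by blast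
qed

lemma infsum_sum:
  fixes f :: "'i \<Rightarrow> 'a \<Rightarrow> 'b::{topological_comm_monoid_add, t2_space}"
  assumes "finite I" "\<And>x. x \<in> I \<Longrightarrow> f x summable_on A"
  shows "(\<Sum>\<^sub>\<infinity>m\<in>A. \<Sum>x\<in>I. f x m) = (\<Sum>x\<in>I. \<Sum>\<^sub>\<infinity>m\<in>A. f x m)"
proof (rule infsumI, rule has_sum_sum[OF assms(1)])
  show "(f x has_sum infsum (f x) A) A" if "x \<in> I" for x
    using assms(2)[OF that] by (rule has_sum_infsum)
qed

lemma abs_summable_on_mult_bounded:
  fixes \<beta> V :: "'a \<Rightarrow> complex"
  assumes "(\<lambda>m. norm (\<beta> m)) summable_on A" "\<And>m. norm (V m) \<le> 1"
  shows "(\<lambda>m. norm (\<beta> m * V m)) summable_on A"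
  by (rule summable_on_comparison_test[OF assms(1)])
     (auto simp: norm_mult intro: mult_left_le[OF assms(2)])

lemma norm_infsum_mult_bounded_le:
  fixes \<beta> V :: "'a \<Rightarrow> complex"
  assumes \<beta>: "(\<lambda>m. norm (\<beta> m)) summable_on UNIV" and V: "\<And>m. norm (V m) \<le> 1"
  shows "norm (\<Sum>\<^sub>\<infinity>m. \<beta> m * V m) \<le> (\<Sum>\<^sub>\<infinity>m. norm (\<beta> m))"
proof -
  note abs = abs_summable_on_mult_bounded[OF \<beta> V]
  have "norm (\<Sum>\<^sub>\<infinity>m. \<beta> m * V m) \<le> (\<Sum>\<^sub>\<infinity>m. norm (\<beta> m * V m))"
    by (rule norm_infsum_bound[OF abs])
  also have "\<dots> \<le> (\<Sum>\<^sub>\<infinity>m. norm (\<beta> m))"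
    by (rule infsum_mono[OF abs \<beta>]) (simp add: norm_mult mult_left_le V)
  finally show ?thesis .
qed

lemma norm_sum_infsum_mult_le:
  fixes \<beta> :: "'a \<Rightarrow> complex" and V :: "'x \<Rightarrow> 'a \<Rightarrow> complex" and c :: "'x \<Rightarrow> complex"
  assumes I: "finite I" and \<beta>: "(\<lambda>m. norm (\<beta> m)) summable_on UNIV"
    and V: "\<And>x m. norm (V x m) \<le> 1"
    and M: "\<And>m. norm (\<Sum>x\<in>I. c x * V x m) \<le> M"
  shows "norm (\<Sum>x\<in>I. c x * (\<Sum>\<^sub>\<infinity>m. \<beta> m * V x m)) \<le> M * (\<Sum>\<^sub>\<infinity>m. norm (\<beta> m))"
proof -
  have summable: "(\<lambda>m. c x * (\<beta> m * V x m)) summable_on UNIV" for x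
    by (rule summable_on_cmult_right, rule abs_summable_summable, rule abs_summable_on_mult_bounded[OF \<beta> V])
  have "(\<Sum>x\<in>I. c x * (\<Sum>\<^sub>\<infinity>m. \<beta> m * V x m)) = (\<Sum>x\<in>I. \<Sum>\<^sub>\<infinity>m. c x * (\<beta> m * V x m))"
    by (simp add: infsum_cmult_right')
  also have "\<dots> = (\<Sum>\<^sub>\<infinity>m. \<Sum>x\<in>I. c x * (\<beta> m * V x m))"
    by (rule infsum_sum[symmetric]) (rule I, rule summable)
  also have "\<dots> = (\<Sum>\<^sub>\<infinity>m. \<beta> m * (\<Sum>x\<in>I. c x * V x m))"
    by (simp add: sum_distrib_left algebra_simps)
  finally have eq: "(\<Sum>x\<in>I. c x * (\<Sum>\<^sub>\<infinity>m. \<beta> m * V x m)) = (\<Sum>\<^sub>\<infinity>m. \<beta> m * (\<Sum>x\<in>I. c x * V x m))" .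
  have bound: "(\<lambda>m. norm (\<beta> m) * M) summable_on UNIV" by (rule summable_on_cmult_left[OF \<beta>])
  have abs: "(\<lambda>m. norm (\<beta> m * (\<Sum>x\<in>I. c x * V x m))) summable_on UNIV"
    by (rule summable_on_comparison_test[OF bound]) (auto simp: norm_mult intro: mult_left_mono M)
  have "norm (\<Sum>\<^sub>\<infinity>m. \<beta> m * (\<Sum>x\<in>I. c x * V x m)) \<le> (\<Sum>\<^sub>\<infinity>m. norm (\<beta> m * (\<Sum>x\<in>I. c x * V x m)))"
    by (rule norm_infsum_bound[OF abs])
  also have "\<dots> \<le> (\<Sum>\<^sub>\<infinity>m. norm (\<beta> m) * M)"
    by (rule infsum_mono[OF abs bound]) (auto simp: norm_mult intro: mult_left_mono M)
  also have "\<dots> = M * (\<Sum>\<^sub>\<infinity>m. norm (\<beta> m))" by (simp add: infsum_cmult_right' mult.commute)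
  finally show ?thesis using eq by simp
qed

lemma norm_sum_infsum_mult_cnj_le:
  fixes \<beta> :: "'a \<Rightarrow> complex" and V W :: "'x \<Rightarrow> 'a \<Rightarrow> complex" and c :: "'x \<Rightarrow> complex"
  assumes I: "finite I" and \<beta>: "(\<lambda>m. norm (\<beta> m)) summable_on UNIV"
    and V: "\<And>x m. norm (V x m) \<le> 1" and W: "\<And>x m. norm (W x m) \<le> 1"
    and M: "\<And>m m'. norm (\<Sum>x\<in>I. c x * V x m * cnj (W x m')) \<le> M"
  shows "norm (\<Sum>x\<in>I. c x * (\<Sum>\<^sub>\<infinity>m. \<beta> m * V x m) * cnj (\<Sum>\<^sub>\<infinity>m. \<beta> m * W x m))
     \<le> M * (\<Sum>\<^sub>\<infinity>m. norm (\<beta> m))\<^sup>2"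
proof -
  let ?N = "\<Sum>\<^sub>\<infinity>m. norm (\<beta> m)"
  have \<beta>_cnj: "(\<lambda>m. norm (cnj (\<beta> m))) summable_on UNIV" using \<beta> by simp
  have inner: "norm (\<Sum>x\<in>I. (c x * V x m) * (\<Sum>\<^sub>\<infinity>m'. cnj (\<beta> m') * cnj (W x m'))) \<le> M * ?N" for m
    using norm_sum_infsum_mult_le[OF I \<beta>_cnj, of "\<lambda>x m'. cnj (W x m')" "\<lambda>x. c x * V x m" M] W M
    by (simp add: mult.assoc)
  have "norm (\<Sum>x\<in>I. (c x * cnj (\<Sum>\<^sub>\<infinity>m. \<beta> m * W x m)) * (\<Sum>\<^sub>\<infinity>m. \<beta> m * V x m)) \<le> (M * ?N) * ?N"
  proof (rule norm_sum_infsum_mult_le[OF I \<beta> V])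
    fix m
    have "(\<Sum>x\<in>I. c x * cnj (\<Sum>\<^sub>\<infinity>m. \<beta> m * W x m) * V x m) =
          (\<Sum>x\<in>I. (c x * V x m) * (\<Sum>\<^sub>\<infinity>m'. cnj (\<beta> m') * cnj (W x m')))"
      by (simp flip: infsum_cnj add: algebra_simps)
    then show "norm (\<Sum>x\<in>I. c x * cnj (\<Sum>\<^sub>\<infinity>m. \<beta> m * W x m) * V x m) \<le> M * ?N"
      using inner by simp
  qed
  then show ?thesis by (simp add: algebra_simps power2_eq_square)
qed

lemma norm_sum_infsum_pairs_le:
  fixes \<beta> :: "'p \<Rightarrow> 'a \<Rightarrow> complex" and co :: "'x \<Rightarrow> complex" and V W :: "'x \<Rightarrow> 'a \<Rightarrow> complex"
  assumes I: "finite I"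
    and \<beta>: "\<And>p. p \<in> P \<Longrightarrow> (\<lambda>m. norm (\<beta> p m)) summable_on UNIV"
    and N: "(\<lambda>p. (\<Sum>\<^sub>\<infinity>m. norm (\<beta> p m))\<^sup>2) summable_on P"
    and V: "\<And>x m. norm (V x m) \<le> 1" and W: "\<And>x m. norm (W x m) \<le> 1"
    and M: "\<And>m m'. norm (\<Sum>x\<in>I. co x * V x m * cnj (W x m')) \<le> M"
  shows "norm (\<Sum>x\<in>I. co x * (\<Sum>\<^sub>\<infinity>p\<in>P. (\<Sum>\<^sub>\<infinity>m. \<beta> p m * V x m) * cnj (\<Sum>\<^sub>\<infinity>m. \<beta> p m * W x m)))
     \<le> M * (\<Sum>\<^sub>\<infinity>p\<in>P. (\<Sum>\<^sub>\<infinity>m. norm (\<beta> p m))\<^sup>2)"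
proof -
  define N where "N = (\<lambda>p. \<Sum>\<^sub>\<infinity>m. norm (\<beta> p m))"
  define h where "h = (\<lambda>p x. (\<Sum>\<^sub>\<infinity>m. \<beta> p m * V x m) * cnj (\<Sum>\<^sub>\<infinity>m. \<beta> p m * W x m))"
  have N_summable: "(\<lambda>p. (N p)\<^sup>2) summable_on P" using N by (simp add: N_def)
  have norm_h: "norm (h p x) \<le> (N p)\<^sup>2" if p: "p \<in> P" for p x
  proof -
    have "norm (h p x) = norm (\<Sum>\<^sub>\<infinity>m. \<beta> p m * V x m) * norm (\<Sum>\<^sub>\<infinity>m. \<beta> p m * W x m)"
      by (simp add: h_def norm_mult)
    also have "\<dots> \<le> N p * N p"
      unfolding N_def using \<beta>[OF p] V W
      by (intro mult_mono norm_infsum_mult_bounded_le infsum_nonneg) auto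
    finally show ?thesis by (simp add: power2_eq_square)
  qed
  have h_summable: "(\<lambda>p. co x * h p x) summable_on P" for x
  proof (rule summable_on_cmult_right, rule abs_summable_summable)
    show "(\<lambda>p. norm (h p x)) summable_on P"
      by (rule summable_on_comparison_test[OF N_summable]) (use norm_h in auto)
  qed
  have per_p: "norm (\<Sum>x\<in>I. co x * h p x) \<le> M * (N p)\<^sup>2" if p: "p \<in> P" for p
    using norm_sum_infsum_mult_cnj_le[OF I \<beta>[OF p] V W M] by (simp add: h_def N_def mult.assoc)
  have MN: "(\<lambda>p. M * (N p)\<^sup>2) summable_on P" by (rule summable_on_cmult_right[OF N_summable])
  have abs: "(\<lambda>p. norm (\<Sum>x\<in>I. co x * h p x)) summable_on P"
    by (rule summable_on_comparison_test[OF MN]) (use per_p in auto)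
  have "norm (\<Sum>x\<in>I. co x * (\<Sum>\<^sub>\<infinity>p\<in>P. h p x)) = norm (\<Sum>\<^sub>\<infinity>p\<in>P. \<Sum>x\<in>I. co x * h p x)"
    using infsum_sum[OF I h_summable] by (simp add: infsum_cmult_right')
  also have "\<dots> \<le> (\<Sum>\<^sub>\<infinity>p\<in>P. norm (\<Sum>x\<in>I. co x * h p x))"
    by (rule norm_infsum_bound[OF abs])
  also have "\<dots> \<le> (\<Sum>\<^sub>\<infinity>p\<in>P. M * (N p)\<^sup>2)" by (rule infsum_mono[OF abs MN]) (use per_p in auto)
  also have "\<dots> = M * (\<Sum>\<^sub>\<infinity>p\<in>P. (N p)\<^sup>2)" by (rule infsum_cmult_right')
  finally show ?thesis by (simp add: h_def N_def)
qed

section \<open>Sobolev spaces on the torus\<close>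

lemma sob_weight_pos: "0 < sob_weight s m"
  unfolding sob_weight_def by (intro powr_gt_zero[THEN iffD2]) (smt (verit) zero_le_power2)

lemma sob_weight_nonneg: "0 \<le> sob_weight s m"
  using sob_weight_pos less_imp_le by blast

lemma H_norm_nonneg: "0 \<le> H_norm s f"
  unfolding H_norm_def by (simp add: infsum_nonneg sob_weight_nonneg)

lemma in_H_zero: "in_H s (\<lambda>_. 0)"
  by (simp add: in_H_def)

lemma in_H_scale: "in_H s f \<Longrightarrow> in_H s (\<lambda>m. c * f m)"
  unfolding in_H_def norm_mult power_mult_distrib
  using summable_on_cmult_right[of "\<lambda>m. sob_weight s m * (cmod (f m))\<^sup>2" UNIV "(cmod c)\<^sup>2"]
  by (simp add: algebra_simps)

lemma in_H_add:
  assumes "in_H s f" "in_H s g"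
  shows "in_H s (\<lambda>m. f m + g m)"
  unfolding in_H_def
proof (rule summable_on_comparison_test)
  show "(\<lambda>m. 2 * (sob_weight s m * (cmod (f m))\<^sup>2) + 2 * (sob_weight s m * (cmod (g m))\<^sup>2)) summable_on UNIV"
    using assms unfolding in_H_def by (intro summable_on_add summable_on_cmult_right)
  fix m
  have "(cmod (f m + g m))\<^sup>2 \<le> (cmod (f m) + cmod (g m))\<^sup>2"
    by (simp add: norm_triangle_ineq power_mono)
  also have "\<dots> \<le> 2 * (cmod (f m))\<^sup>2 + 2 * (cmod (g m))\<^sup>2"
    using sum_squares_bound[of "cmod (f m)" "cmod (g m)"] by (simp add: power2_sum)
  finally have "sob_weight s m * (cmod (f m + g m))\<^sup>2
      \<le> sob_weight s m * (2 * (cmod (f m))\<^sup>2 + 2 * (cmod (g m))\<^sup>2)"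
    by (rule mult_left_mono[OF _ sob_weight_nonneg])
  then show "sob_weight s m * (cmod (f m + g m))\<^sup>2
      \<le> 2 * (sob_weight s m * (cmod (f m))\<^sup>2) + 2 * (sob_weight s m * (cmod (g m))\<^sup>2)"
    by (simp add: algebra_simps)
  show "0 \<le> sob_weight s m * (cmod (f m + g m))\<^sup>2" by (simp add: sob_weight_nonneg)
qed

lemma in_H_sum:
  assumes "finite P" "\<And>p. p \<in> P \<Longrightarrow> in_H s (g p)"
  shows "in_H s (\<lambda>m. \<Sum>p\<in>P. c p * g p m)"
  using assms
  by (induction P rule: finite_induct) (auto simp: in_H_zero intro!: in_H_add in_H_scale)

lemma H_inner_summable:
  assumes "in_H s f" "in_H s g"
  shows "(\<lambda>m. complex_of_real (sob_weight s m) * f m * cnj (g m)) summable_on UNIV"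
proof (rule abs_summable_summable, rule summable_on_comparison_test)
  show "(\<lambda>m. sob_weight s m * (cmod (f m))\<^sup>2 + sob_weight s m * (cmod (g m))\<^sup>2) summable_on UNIV"
    using assms unfolding in_H_def by (intro summable_on_add)
  fix m
  have "cmod (f m) * cmod (g m) \<le> 2 * cmod (f m) * cmod (g m)" by simp
  also have "\<dots> \<le> (cmod (f m))\<^sup>2 + (cmod (g m))\<^sup>2" by (rule sum_squares_bound)
  finally have "sob_weight s m * (cmod (f m) * cmod (g m)) \<le> sob_weight s m * ((cmod (f m))\<^sup>2 + (cmod (g m))\<^sup>2)"
    by (intro mult_left_mono sob_weight_nonneg)
  then show "norm (complex_of_real (sob_weight s m) * f m * cnj (g m))
      \<le> sob_weight s m * (cmod (f m))\<^sup>2 + sob_weight s m * (cmod (g m))\<^sup>2"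
    by (simp add: norm_mult sob_weight_nonneg algebra_simps)
qed simp

lemma H_norm_sq_sum_expand:
  assumes P: "finite P" and g: "\<And>p. p \<in> P \<Longrightarrow> in_H s (g p)"
  shows "complex_of_real (\<Sum>\<^sub>\<infinity>m. sob_weight s m * (cmod (\<Sum>p\<in>P. c p * g p m))\<^sup>2)
       = (\<Sum>p\<in>P. \<Sum>q\<in>P. c p * cnj (c q) * H_inner s (g p) (g q))"
proof -
  define t where "t = (\<lambda>p q m. c p * cnj (c q) * (complex_of_real (sob_weight s m) * g p m * cnj (g q m)))"
  have t_summable: "t p q summable_on UNIV" if "p \<in> P" "q \<in> P" for p q
    unfolding t_def by (intro summable_on_cmult_right H_inner_summable g that)
  have real_summable: "(\<lambda>m. sob_weight s m * (cmod (\<Sum>p\<in>P. c p * g p m))\<^sup>2) summable_on UNIV"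
    using in_H_sum[OF P g] by (simp add: in_H_def)
  have pointwise: "complex_of_real (sob_weight s m * (cmod (\<Sum>p\<in>P. c p * g p m))\<^sup>2) = (\<Sum>p\<in>P. \<Sum>q\<in>P. t p q m)" for m
  proof -
    have "(\<Sum>p\<in>P. c p * g p m) * cnj (\<Sum>p\<in>P. c p * g p m)
        = (\<Sum>p\<in>P. \<Sum>q\<in>P. (c p * g p m) * (cnj (c q) * cnj (g q m)))"
      unfolding cnj_sum complex_cnj_mult by (rule sum_product)
    then show ?thesis
      by (simp only: of_real_mult complex_norm_square)
         (simp add: t_def sum_distrib_left mult.assoc mult.left_commute)
  qed
  have "complex_of_real (\<Sum>\<^sub>\<infinity>m. sob_weight s m * (cmod (\<Sum>p\<in>P. c p * g p m))\<^sup>2)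
      = (\<Sum>\<^sub>\<infinity>m. complex_of_real (sob_weight s m * (cmod (\<Sum>p\<in>P. c p * g p m))\<^sup>2))"
    using has_sum_of_real[OF has_sum_infsum[OF real_summable], where 'a=complex] by (simp add: infsumI)
  also have "\<dots> = (\<Sum>\<^sub>\<infinity>m. \<Sum>p\<in>P. \<Sum>q\<in>P. t p q m)"
    by (simp only: pointwise)
  also have "\<dots> = (\<Sum>p\<in>P. \<Sum>q\<in>P. \<Sum>\<^sub>\<infinity>m. t p q m)"
    using P t_summable by (simp add: infsum_sum summable_on_sum)
  also have "\<dots> = (\<Sum>p\<in>P. \<Sum>q\<in>P. c p * cnj (c q) * H_inner s (g p) (g q))"
    by (simp add: t_def H_inner_def infsum_cmult_right')
  finally show ?thesis .
qed

lemma orthonormal_in_H: "complete_orthonormal_system r \<Phi> \<Longrightarrow> p \<ge> 1 \<Longrightarrow> in_H r (\<Phi> p)"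
  by (simp add: complete_orthonormal_system_def)

lemma H_norm_sq_orthonormal_sum:
  assumes \<Phi>: "complete_orthonormal_system r \<Phi>" and P: "finite P" "P \<subseteq> {1..}"
  shows "(\<Sum>\<^sub>\<infinity>m. sob_weight r m * (cmod (\<Sum>p\<in>P. c p * \<Phi> p m))\<^sup>2) = (\<Sum>p\<in>P. (cmod (c p))\<^sup>2)"
proof -
  have inner: "H_inner r (\<Phi> p) (\<Phi> q) = (if p = q then 1 else 0)" if "p \<in> P" "q \<in> P" for p q
  proof -
    have "p \<ge> 1" "q \<ge> 1" using P(2) that by auto
    then show ?thesis using \<Phi> unfolding complete_orthonormal_system_def by blast
  qed
  have "complex_of_real (\<Sum>\<^sub>\<infinity>m. sob_weight r m * (cmod (\<Sum>p\<in>P. c p * \<Phi> p m))\<^sup>2)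
      = (\<Sum>p\<in>P. \<Sum>q\<in>P. c p * cnj (c q) * H_inner r (\<Phi> p) (\<Phi> q))"
    using P by (intro H_norm_sq_sum_expand orthonormal_in_H[OF \<Phi>]) auto
  also have "\<dots> = (\<Sum>p\<in>P. c p * cnj (c p))"
  proof (rule sum.cong[OF refl])
    fix p assume p: "p \<in> P"
    have "(\<Sum>q\<in>P. c p * cnj (c q) * H_inner r (\<Phi> p) (\<Phi> q)) = (\<Sum>q\<in>P. if p = q then c p * cnj (c q) else 0)"
      by (rule sum.cong) (auto simp: inner p)
    also have "\<dots> = c p * cnj (c p)" using P(1) p by (simp add: sum.delta)
    finally show "(\<Sum>q\<in>P. c p * cnj (c q) * H_inner r (\<Phi> p) (\<Phi> q)) = c p * cnj (c p)" .
  qed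
  also have "\<dots> = complex_of_real (\<Sum>p\<in>P. (cmod (c p))\<^sup>2)"
    by (simp only: of_real_sum complex_norm_square)
  finally show ?thesis by (simp only: of_real_eq_iff)
qed

lemma coeff_sq_le_H_norm_sq:
  assumes "in_H s f"
  shows "sob_weight s m * (cmod (f m))\<^sup>2 \<le> (H_norm s f)\<^sup>2"
proof -
  have "sob_weight s m * (cmod (f m))\<^sup>2 = (\<Sum>m'\<in>{m}. sob_weight s m' * (cmod (f m'))\<^sup>2)" by simp
  also have "\<dots> \<le> (\<Sum>\<^sub>\<infinity>m'. sob_weight s m' * (cmod (f m'))\<^sup>2)"
    using assms by (intro finite_sum_le_infsum) (auto simp: in_H_def sob_weight_nonneg)
  also have "\<dots> = (H_norm s f)\<^sup>2"
    unfolding H_norm_def by (simp add: infsum_nonneg sob_weight_nonneg)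
  finally show ?thesis .
qed

lemma bounded_linear_op_in_H: "bounded_linear_op r k F \<Longrightarrow> in_H r f \<Longrightarrow> in_H k (F f)"
  unfolding bounded_linear_op_def by blast

lemma bounded_linear_op_add:
  "bounded_linear_op r k F \<Longrightarrow> in_H r f \<Longrightarrow> in_H r g \<Longrightarrow> F (\<lambda>m. f m + g m) = (\<lambda>m. F f m + F g m)"
  unfolding bounded_linear_op_def by blast

lemma bounded_linear_op_scale:
  "bounded_linear_op r k F \<Longrightarrow> in_H r f \<Longrightarrow> F (\<lambda>m. c * f m) = (\<lambda>m. c * F f m)"
  unfolding bounded_linear_op_def by blast

lemma bounded_linear_op_sum:
  assumes F: "bounded_linear_op r k F" and "finite P" "\<And>p. p \<in> P \<Longrightarrow> in_H r (g p)"
  shows "F (\<lambda>m. \<Sum>p\<in>P. c p * g p m) = (\<lambda>m. \<Sum>p\<in>P. c p * F (g p) m)"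
  using assms(2,3)
proof (induction P rule: finite_induct)
  case empty
  show ?case using bounded_linear_op_scale[OF F in_H_zero, of 0] by simp
next
  case (insert x P)
  then have "F (\<lambda>m. c x * g x m + (\<Sum>p\<in>P. c p * g p m))
      = (\<lambda>m. F (\<lambda>m. c x * g x m) m + F (\<lambda>m. \<Sum>p\<in>P. c p * g p m) m)"
    by (intro bounded_linear_op_add[OF F] in_H_scale in_H_sum) auto
  then show ?case using insert bounded_linear_op_scale[OF F, of "g x" "c x"] by simp
qed

lemma H_norm_le_op_norm:
  assumes F: "bounded_linear_op r k F" and f: "in_H r f" "H_norm r f \<le> 1"
  shows "H_norm k (F f) \<le> op_norm r k F"
  unfolding op_norm_def
proof (rule cSup_upper)
  obtain B where B: "\<And>g. in_H r g \<Longrightarrow> H_norm k (F g) \<le> B * H_norm r g"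
    using F unfolding bounded_linear_op_def by blast
  show "bdd_above {H_norm k (F f) | f. in_H r f \<and> H_norm r f \<le> 1}"
  proof (rule bdd_aboveI)
    fix y assume "y \<in> {H_norm k (F f) | f. in_H r f \<and> H_norm r f \<le> 1}"
    then obtain g where g: "y = H_norm k (F g)" "in_H r g" "H_norm r g \<le> 1" by blast
    have "B * H_norm r g \<le> \<bar>B\<bar> * H_norm r g" by (intro mult_right_mono H_norm_nonneg) simp
    also have "\<dots> \<le> \<bar>B\<bar>" using g(3) by (intro mult_left_le) auto
    finally show "y \<le> \<bar>B\<bar>" using B[OF g(2)] g(1) by simp
  qed
qed (use f in blast)

lemma op_norm_nonneg:
  assumes F: "bounded_linear_op r k F" shows "0 \<le> op_norm r k F"
proof -
  have "H_norm r (\<lambda>_. 0) \<le> 1" by (simp add: H_norm_def)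
  then have "H_norm k (F (\<lambda>_. 0)) \<le> op_norm r k F" by (rule H_norm_le_op_norm[OF F in_H_zero])
  then show ?thesis by (rule order_trans[OF H_norm_nonneg])
qed

text \<open>Bessel's inequality at a single frequency \<open>m\<close>: with \<open>s = \<Sum>\<^sub>p |F(\<phi>\<^sub>p)\<^sub>m|\<^sup>2\<close>, the unit vector
  \<open>\<Sum>\<^sub>p conj (F(\<phi>\<^sub>p)\<^sub>m) \<phi>\<^sub>p / \<surd>s\<close> is mapped by \<open>F\<close> to a function whose coefficient at \<open>m\<close> is \<open>\<surd>s\<close>.\<close>

lemma sob_weight_sum_sq_le_op_norm:
  assumes \<Phi>: "complete_orthonormal_system r \<Phi>" and F: "bounded_linear_op r k F"
    and P: "finite P" "P \<subseteq> {1..}"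
  shows "sob_weight k m * (\<Sum>p\<in>P. (cmod (F (\<Phi> p) m))\<^sup>2) \<le> (op_norm r k F)\<^sup>2"
proof -
  define s where "s = (\<Sum>p\<in>P. (cmod (F (\<Phi> p) m))\<^sup>2)"
  show ?thesis
  proof (cases "s = 0")
    case True then show ?thesis by (simp add: s_def[symmetric])
  next
    case False
    then have s: "0 < s" using sum_nonneg[of P "\<lambda>p. (cmod (F (\<Phi> p) m))\<^sup>2"] by (simp add: s_def)
    have in_H: "in_H r (\<Phi> p)" if "p \<in> P" for p
      using P(2) that orthonormal_in_H[OF \<Phi>] by auto
    define c where "c = (\<lambda>p. cnj (F (\<Phi> p) m) / complex_of_real (sqrt s))"
    define f where "f = (\<lambda>m'. \<Sum>p\<in>P. c p * \<Phi> p m')"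
    have f: "in_H r f" unfolding f_def by (rule in_H_sum[OF P(1) in_H])
    have "(\<Sum>p\<in>P. (cmod (c p))\<^sup>2) = (\<Sum>p\<in>P. (cmod (F (\<Phi> p) m))\<^sup>2 / s)"
      unfolding c_def using s by (simp add: norm_divide power_divide)
    also have "\<dots> = 1" using s by (simp add: sum_divide_distrib[symmetric] s_def)
    finally have "H_norm r f = 1"
      unfolding H_norm_def f_def H_norm_sq_orthonormal_sum[OF \<Phi> P] by simp
    then have norm_Ff: "H_norm k (F f) \<le> op_norm r k F"
      by (intro H_norm_le_op_norm[OF F f]) simp
    have "F f = (\<lambda>m'. \<Sum>p\<in>P. c p * F (\<Phi> p) m')"
      unfolding f_def by (rule bounded_linear_op_sum[OF F P(1) in_H])
    then have "F f m = (\<Sum>p\<in>P. F (\<Phi> p) m * cnj (F (\<Phi> p) m)) / complex_of_real (sqrt s)"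
      unfolding c_def by (simp add: sum_divide_distrib mult.commute)
    also have "\<dots> = complex_of_real (s / sqrt s)"
      by (simp only: s_def of_real_divide of_real_sum complex_norm_square)
    finally have "cmod (F f m) = s / sqrt s" using s by (simp add: norm_divide)
    then have "sob_weight k m * s = sob_weight k m * (cmod (F f m))\<^sup>2"
      using s by (simp add: power_divide power2_eq_square)
    also have "\<dots> \<le> (H_norm k (F f))\<^sup>2"
      by (rule coeff_sq_le_H_norm_sq[OF bounded_linear_op_in_H[OF F f]])
    also have "\<dots> \<le> (op_norm r k F)\<^sup>2"
      by (rule power_mono[OF norm_Ff H_norm_nonneg])
    finally show ?thesis by (simp add: s_def)
  qed
qed

lemma sqrt_sob_weight_mult_le_op_norm:
  assumes \<Phi>: "complete_orthonormal_system r \<Phi>" and F: "bounded_linear_op r k F" and p: "p \<ge> 1"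
  shows "sqrt (sob_weight k m) * cmod (F (\<Phi> p) m) \<le> op_norm r k F"
proof -
  have "sob_weight k m * (cmod (F (\<Phi> p) m))\<^sup>2 \<le> (op_norm r k F)\<^sup>2"
    using sob_weight_sum_sq_le_op_norm[OF \<Phi> F, of "{p}" m] p by simp
  then have "sqrt (sob_weight k m * (cmod (F (\<Phi> p) m))\<^sup>2) \<le> sqrt ((op_norm r k F)\<^sup>2)"
    by (rule real_sqrt_le_mono)
  then show ?thesis using op_norm_nonneg[OF F] by (simp add: real_sqrt_mult sob_weight_nonneg)
qed

section \<open>A lattice sum\<close>

lemma summable_one_plus_square_powr:
  fixes t :: real assumes t: "t < -1/2"
  shows "summable (\<lambda>n::nat. (1 + (real n)\<^sup>2) powr t)"
proof (rule summable_comparison_test'[where N = 1])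
  show "summable (\<lambda>n::nat. real n powr (2 * t))" using t by (subst summable_real_powr_iff) auto
  fix n :: nat assume n: "n \<ge> 1"
  have "(1 + (real n)\<^sup>2) powr t \<le> ((real n)\<^sup>2) powr t"
    by (rule powr_mono2') (use t n in auto)
  also have "\<dots> = real n powr (2 * t)" by (simp add: powr_powr[symmetric] powr_realpow)
  finally show "norm ((1 + (real n)\<^sup>2) powr t) \<le> real n powr (2 * t)" by simp
qed

lemma summable_on_int_one_plus_square_powr:
  fixes t :: real assumes t: "t < -1/2"
  shows "(\<lambda>x::int. (1 + (real_of_int x)\<^sup>2) powr t) summable_on UNIV"
proof -
  let ?g = "\<lambda>x::int. (1 + (real_of_int x)\<^sup>2) powr t"
  have nat: "(\<lambda>n::nat. (1 + (real n)\<^sup>2) powr t) summable_on UNIV"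
    using summable_one_plus_square_powr[OF t] by (subst summable_on_UNIV_nonneg_real_iff) auto
  have nonneg: "?g summable_on range int"
    by (subst summable_on_reindex) (use nat in \<open>auto simp: o_def inj_on_def\<close>)
  have nonpos: "?g summable_on range (\<lambda>n. - int n)"
    by (subst summable_on_reindex) (use nat in \<open>auto simp: o_def inj_on_def\<close>)
  have "UNIV = range int \<union> range (\<lambda>n. - int n)"
  proof -
    have "x \<in> range int \<union> range (\<lambda>n. - int n)" for x :: int
      by (cases "x \<ge> 0") (auto intro: image_eqI[of _ _ "nat x"] image_eqI[of _ _ "nat (- x)"])
    then show ?thesis by auto
  qed
  then show ?thesis using summable_on_union[OF nonneg nonpos] by simp
qed

lemma abs_div_sqrt_sob_weight_le:
  fixes k :: real assumes k: "k \<ge> 1"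
  shows "\<bar>real_of_int x\<bar> / sqrt (sob_weight k (x, y))
    \<le> (1 + (real_of_int x)\<^sup>2) powr ((1 - k) / 4) * (1 + (real_of_int y)\<^sup>2) powr ((1 - k) / 4)"
proof -
  define t where "t = (1 - k) / 4"
  define a where "a = (real_of_int x)\<^sup>2"
  define b where "b = (real_of_int y)\<^sup>2"
  define Q where "Q = 1 + a + b"
  have a: "0 \<le> a" and b: "0 \<le> b" by (auto simp: a_def b_def)
  then have Q: "1 \<le> Q" by (simp add: Q_def)
  have "\<bar>real_of_int x\<bar> = sqrt a" by (simp add: a_def)
  also have "\<dots> \<le> Q powr (1/2)" using b Q by (simp add: Q_def powr_half_sqrt)
  finally have "\<bar>real_of_int x\<bar> / Q powr (k/2) \<le> Q powr (1/2) / Q powr (k/2)"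
    by (rule divide_right_mono) simp
  also have "\<dots> = Q powr (1/2 - k/2)" using Q by (simp add: powr_diff)
  also have "1/2 - k/2 = 2 * t" by (simp add: t_def field_simps)
  also have "Q powr (2 * t) = (Q\<^sup>2) powr t" using Q by (simp add: powr_powr[symmetric] powr_realpow)
  also have "\<dots> \<le> ((1 + a) * (1 + b)) powr t"
  proof (rule powr_mono2')
    have "0 \<le> a * b" using a b by simp
    then show "(1 + a) * (1 + b) \<le> Q\<^sup>2"
      using a b unfolding Q_def power2_eq_square by (simp add: algebra_simps)
  qed (use k a b in \<open>auto simp: t_def\<close>)
  also have "\<dots> = (1 + a) powr t * (1 + b) powr t" using a b by (simp add: powr_mult)
  finally show ?thesis
    using Q by (simp add: sob_weight_def powr_half_sqrt_powr a_def b_def Q_def t_def)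
qed

definition lattice_sum :: "real \<Rightarrow> real" where
  "lattice_sum k = (\<Sum>\<^sub>\<infinity>m::int \<times> int. \<bar>real_of_int (fst m)\<bar> / sqrt (sob_weight k m))"

lemma lattice_sum_summable:
  fixes k :: real assumes k: "k > 3"
  shows "(\<lambda>m::int \<times> int. \<bar>real_of_int (fst m)\<bar> / sqrt (sob_weight k m)) summable_on UNIV"
proof -
  let ?g = "\<lambda>x::int. (1 + (real_of_int x)\<^sup>2) powr ((1 - k) / 4)"
  have g: "?g summable_on UNIV"
    by (rule summable_on_int_one_plus_square_powr) (use k in simp)
  have "(\<lambda>m::int \<times> int. ?g (fst m) * ?g (snd m)) summable_on Sigma UNIV (\<lambda>_. UNIV)"
  proof (rule summable_on_SigmaI[where g = "\<lambda>x. ?g x * infsum ?g UNIV"])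
    show "((\<lambda>y. ?g (fst (x, y)) * ?g (snd (x, y))) has_sum ?g x * infsum ?g UNIV) UNIV" for x
      using has_sum_cmult_right[OF has_sum_infsum[OF g], of "?g x"] by simp
    show "(\<lambda>x. ?g x * infsum ?g UNIV) summable_on UNIV" by (rule summable_on_cmult_left[OF g])
  qed auto
  then have prod: "(\<lambda>m::int \<times> int. ?g (fst m) * ?g (snd m)) summable_on UNIV" by simp
  show ?thesis
  proof (rule summable_on_comparison_test[OF prod])
    fix m :: "int \<times> int"
    show "\<bar>real_of_int (fst m)\<bar> / sqrt (sob_weight k m) \<le> ?g (fst m) * ?g (snd m)"
      using abs_div_sqrt_sob_weight_le[of k "fst m" "snd m"] k by simp
    show "0 \<le> \<bar>real_of_int (fst m)\<bar> / sqrt (sob_weight k m)" by (simp add: sob_weight_nonneg)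
  qed
qed

lemma lattice_sum_nonneg: "0 \<le> lattice_sum k"
  unfolding lattice_sum_def by (rule infsum_nonneg) (simp add: sob_weight_nonneg)

section \<open>Fourier coefficients of the derivative\<close>

definition d1_coeff :: "fourier2 \<Rightarrow> int \<times> int \<Rightarrow> complex" where
  "d1_coeff f m = \<i> * of_int (fst m) * f m"

lemma norm_d1_coeff: "cmod (d1_coeff f m) = \<bar>real_of_int (fst m)\<bar> * cmod (f m)"
  by (simp add: d1_coeff_def norm_mult)

lemma d1_coeff_le_lattice_term:
  assumes "sqrt (sob_weight k m) * cmod (f m) \<le> L"
  shows "cmod (d1_coeff f m) \<le> L * (\<bar>real_of_int (fst m)\<bar> / sqrt (sob_weight k m))"
proof -
  have "cmod (f m) \<le> L / sqrt (sob_weight k m)"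
    using assms sob_weight_pos[of k m] by (simp add: field_simps)
  then have "cmod (d1_coeff f m) \<le> \<bar>real_of_int (fst m)\<bar> * (L / sqrt (sob_weight k m))"
    unfolding norm_d1_coeff by (rule mult_left_mono) simp
  then show ?thesis by (simp add: ac_simps)
qed

lemma d1_coeff_abs_summable:
  assumes k: "k > 3" and f: "\<And>m. sqrt (sob_weight k m) * cmod (f m) \<le> L"
  shows "(\<lambda>m. cmod (d1_coeff f m)) summable_on UNIV"
proof (rule summable_on_comparison_test[OF summable_on_cmult_right[OF lattice_sum_summable[OF k], of L]])
  show "cmod (d1_coeff f m) \<le> L * (\<bar>real_of_int (fst m)\<bar> / sqrt (sob_weight k m))" for m
    by (rule d1_coeff_le_lattice_term[OF f])
qed simp

lemma weighted_coeff_sq_le_lattice_term: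
  assumes "sqrt (sob_weight k m) * cmod (f m) \<le> L"
  shows "\<bar>real_of_int (fst m)\<bar> * sqrt (sob_weight k m) * (cmod (f m))\<^sup>2
    \<le> L\<^sup>2 * (\<bar>real_of_int (fst m)\<bar> / sqrt (sob_weight k m))"
proof -
  have "(sqrt (sob_weight k m) * cmod (f m))\<^sup>2 \<le> L\<^sup>2"
    using assms by (intro power_mono) (auto simp: sob_weight_nonneg)
  then have "\<bar>real_of_int (fst m)\<bar> * (sqrt (sob_weight k m) * cmod (f m))\<^sup>2 \<le> \<bar>real_of_int (fst m)\<bar> * L\<^sup>2"
    by (rule mult_left_mono) simp
  then show ?thesis
    using sob_weight_pos[of k m] by (simp add: field_simps power2_eq_square)
qed

lemma weighted_coeff_sq_summable:
  assumes k: "k > 3" and f: "\<And>m. sqrt (sob_weight k m) * cmod (f m) \<le> L"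
  shows "(\<lambda>m. \<bar>real_of_int (fst m)\<bar> * sqrt (sob_weight k m) * (cmod (f m))\<^sup>2) summable_on UNIV"
proof (rule summable_on_comparison_test[OF summable_on_cmult_right[OF lattice_sum_summable[OF k], of "L\<^sup>2"]])
  show "\<bar>real_of_int (fst m)\<bar> * sqrt (sob_weight k m) * (cmod (f m))\<^sup>2
      \<le> L\<^sup>2 * (\<bar>real_of_int (fst m)\<bar> / sqrt (sob_weight k m))" for m
    by (rule weighted_coeff_sq_le_lattice_term[OF f])
qed (simp add: sob_weight_nonneg)

lemma infsum_Cauchy_Schwarz:
  fixes x y :: "'a \<Rightarrow> real"
  assumes x: "\<And>m. 0 \<le> x m" and y: "\<And>m. 0 \<le> y m"
    and x2: "(\<lambda>m. (x m)\<^sup>2) summable_on A" and y2: "(\<lambda>m. (y m)\<^sup>2) summable_on A"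
  shows "(\<Sum>\<^sub>\<infinity>m\<in>A. x m * y m)\<^sup>2 \<le> (\<Sum>\<^sub>\<infinity>m\<in>A. (x m)\<^sup>2) * (\<Sum>\<^sub>\<infinity>m\<in>A. (y m)\<^sup>2)"
proof -
  have xy_le: "x m * y m \<le> (x m)\<^sup>2 + (y m)\<^sup>2" for m
    using sum_squares_bound[of "x m" "y m"] mult_nonneg_nonneg[OF x y, of m m] by simp
  have xy: "(\<lambda>m. x m * y m) summable_on A"
    by (rule summable_on_comparison_test[OF summable_on_add[OF x2 y2]])
       (use xy_le x y in auto)
  have "(\<Sum>\<^sub>\<infinity>m\<in>A. x m * y m) \<le> sqrt ((\<Sum>\<^sub>\<infinity>m\<in>A. (x m)\<^sup>2) * (\<Sum>\<^sub>\<infinity>m\<in>A. (y m)\<^sup>2))"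
  proof (rule infsum_le_finite_sums[OF xy])
    fix M assume M: "finite M" "M \<subseteq> A"
    have "(\<Sum>m\<in>M. x m * y m)\<^sup>2 \<le> (\<Sum>m\<in>M. (x m)\<^sup>2) * (\<Sum>m\<in>M. (y m)\<^sup>2)"
      by (rule Cauchy_Schwarz_ineq_sum)
    also have "\<dots> \<le> (\<Sum>\<^sub>\<infinity>m\<in>A. (x m)\<^sup>2) * (\<Sum>\<^sub>\<infinity>m\<in>A. (y m)\<^sup>2)"
      using M by (intro mult_mono finite_sum_le_infsum x2 y2 sum_nonneg infsum_nonneg) auto
    finally show "(\<Sum>m\<in>M. x m * y m) \<le> sqrt ((\<Sum>\<^sub>\<infinity>m\<in>A. (x m)\<^sup>2) * (\<Sum>\<^sub>\<infinity>m\<in>A. (y m)\<^sup>2))"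
      by (rule real_le_rsqrt)
  qed
  moreover have "0 \<le> (\<Sum>\<^sub>\<infinity>m\<in>A. x m * y m)" using x y by (simp add: infsum_nonneg)
  ultimately have "(\<Sum>\<^sub>\<infinity>m\<in>A. x m * y m)\<^sup>2 \<le> (sqrt ((\<Sum>\<^sub>\<infinity>m\<in>A. (x m)\<^sup>2) * (\<Sum>\<^sub>\<infinity>m\<in>A. (y m)\<^sup>2)))\<^sup>2"
    by (intro power_mono)
  also have "\<dots> = (\<Sum>\<^sub>\<infinity>m\<in>A. (x m)\<^sup>2) * (\<Sum>\<^sub>\<infinity>m\<in>A. (y m)\<^sup>2)"
    by (simp add: infsum_nonneg)
  finally show ?thesis .
qed

text \<open>Cauchy--Schwarz with the weights \<open>|m\<^sub>1| w\<^sub>k(m)\<^sup>\<plusminus>\<^sup>1\<^sup>/\<^sup>2\<close>.\<close>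

lemma d1_coeff_l1_sq_le:
  assumes k: "k > 3" and f: "\<And>m. sqrt (sob_weight k m) * cmod (f m) \<le> L"
  shows "(\<Sum>\<^sub>\<infinity>m. cmod (d1_coeff f m))\<^sup>2
    \<le> lattice_sum k * (\<Sum>\<^sub>\<infinity>m. \<bar>real_of_int (fst m)\<bar> * sqrt (sob_weight k m) * (cmod (f m))\<^sup>2)"
proof -
  define w where "w = (\<lambda>m. sqrt (sob_weight k m))"
  define b where "b = (\<lambda>m::int \<times> int. \<bar>real_of_int (fst m)\<bar>)"
  have w: "0 < w m" for m by (simp add: w_def sob_weight_pos)
  have "(\<Sum>\<^sub>\<infinity>m. sqrt (b m / w m) * (sqrt (b m * w m) * cmod (f m)))\<^sup>2
     \<le> (\<Sum>\<^sub>\<infinity>m. (sqrt (b m / w m))\<^sup>2) * (\<Sum>\<^sub>\<infinity>m. (sqrt (b m * w m) * cmod (f m))\<^sup>2)"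
  proof (rule infsum_Cauchy_Schwarz)
    show "(\<lambda>m. (sqrt (b m / w m))\<^sup>2) summable_on UNIV"
      using lattice_sum_summable[OF k] w by (simp add: b_def w_def less_imp_le)
    show "(\<lambda>m. (sqrt (b m * w m) * cmod (f m))\<^sup>2) summable_on UNIV"
      using weighted_coeff_sq_summable[OF k f] w
      by (simp add: b_def w_def power_mult_distrib less_imp_le)
  qed (use w in \<open>auto simp: b_def less_imp_le\<close>)
  moreover have "sqrt (b m / w m) * (sqrt (b m * w m) * cmod (f m)) = cmod (d1_coeff f m)" for m
  proof -
    have "sqrt (b m / w m) * sqrt (b m * w m) = b m"
      using w[of m] by (simp add: real_sqrt_mult[symmetric] power2_eq_square b_def)
    then show ?thesis by (simp add: norm_d1_coeff b_def mult.assoc[symmetric])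
  qed
  ultimately show ?thesis
    using w by (simp add: lattice_sum_def b_def w_def power_mult_distrib less_imp_le)
qed

context
  fixes k r :: real and \<Phi> :: "nat \<Rightarrow> fourier2" and F :: "fourier2 \<Rightarrow> fourier2"
  assumes k: "k > 3" and \<Phi>: "complete_orthonormal_system r \<Phi>" and F: "bounded_linear_op r k F"
begin

lemma sum_weighted_coeff_sq_le:
  assumes P: "finite P" "P \<subseteq> {1..}"
  shows "(\<Sum>p\<in>P. \<Sum>\<^sub>\<infinity>m. \<bar>real_of_int (fst m)\<bar> * sqrt (sob_weight k m) * (cmod (F (\<Phi> p) m))\<^sup>2)
    \<le> (op_norm r k F)\<^sup>2 * lattice_sum k"
proof -
  let ?L = "op_norm r k F" and ?b = "\<lambda>m::int \<times> int. \<bar>real_of_int (fst m)\<bar>"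
  have summable: "(\<lambda>m. ?b m * sqrt (sob_weight k m) * (cmod (F (\<Phi> p) m))\<^sup>2) summable_on UNIV"
    if "p \<in> P" for p
  proof -
    have "p \<ge> 1" using P(2) that by auto
    then show ?thesis
      by (rule weighted_coeff_sq_summable[OF k sqrt_sob_weight_mult_le_op_norm[OF \<Phi> F]])
  qed
  have "(\<Sum>p\<in>P. \<Sum>\<^sub>\<infinity>m. ?b m * sqrt (sob_weight k m) * (cmod (F (\<Phi> p) m))\<^sup>2)
      = (\<Sum>\<^sub>\<infinity>m. \<Sum>p\<in>P. ?b m * sqrt (sob_weight k m) * (cmod (F (\<Phi> p) m))\<^sup>2)"
    by (rule infsum_sum[symmetric, OF P(1) summable])
  also have "\<dots> \<le> (\<Sum>\<^sub>\<infinity>m. ?L\<^sup>2 * (?b m / sqrt (sob_weight k m)))"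
  proof (rule infsum_mono)
    show "(\<lambda>m. \<Sum>p\<in>P. ?b m * sqrt (sob_weight k m) * (cmod (F (\<Phi> p) m))\<^sup>2) summable_on UNIV"
      by (rule summable_on_sum[OF P(1) summable])
    show "(\<lambda>m. ?L\<^sup>2 * (?b m / sqrt (sob_weight k m))) summable_on UNIV"
      by (rule summable_on_cmult_right[OF lattice_sum_summable[OF k]])
    fix m
    define q where "q = sqrt (sob_weight k m)"
    have q: "0 < q" "q * q = sob_weight k m" using sob_weight_pos[of k m] by (auto simp: q_def)
    have "?b m * q * X = ?b m / q * (q * q * X)" for X using q(1) by (simp add: field_simps)
    then have "(\<Sum>p\<in>P. ?b m * q * (cmod (F (\<Phi> p) m))\<^sup>2)
        = ?b m / q * (sob_weight k m * (\<Sum>p\<in>P. (cmod (F (\<Phi> p) m))\<^sup>2))"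
      unfolding q(2)[symmetric] sum_distrib_left by (rule sum.cong[OF refl])
    also have "\<dots> \<le> ?b m / q * ?L\<^sup>2"
      using q(1) by (intro mult_left_mono sob_weight_sum_sq_le_op_norm[OF \<Phi> F P]) simp
    finally show "(\<Sum>p\<in>P. ?b m * sqrt (sob_weight k m) * (cmod (F (\<Phi> p) m))\<^sup>2)
        \<le> ?L\<^sup>2 * (?b m / sqrt (sob_weight k m))"
      by (simp add: q_def mult.commute)
  qed
  also have "\<dots> = ?L\<^sup>2 * lattice_sum k"
    unfolding lattice_sum_def by (rule infsum_cmult_right')
  finally show ?thesis .
qed

lemma sum_d1_coeff_l1_sq_le:
  assumes P: "finite P" "P \<subseteq> {1..}"
  shows "(\<Sum>p\<in>P. (\<Sum>\<^sub>\<infinity>m. cmod (d1_coeff (F (\<Phi> p)) m))\<^sup>2) \<le> (op_norm r k F)\<^sup>2 * (lattice_sum k)\<^sup>2"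
proof -
  let ?E = "\<lambda>p. \<Sum>\<^sub>\<infinity>m. \<bar>real_of_int (fst m)\<bar> * sqrt (sob_weight k m) * (cmod (F (\<Phi> p) m))\<^sup>2"
  have "(\<Sum>p\<in>P. (\<Sum>\<^sub>\<infinity>m. cmod (d1_coeff (F (\<Phi> p)) m))\<^sup>2) \<le> (\<Sum>p\<in>P. lattice_sum k * ?E p)"
  proof (rule sum_mono)
    fix p assume "p \<in> P"
    then have "p \<ge> 1" using P(2) by auto
    then show "(\<Sum>\<^sub>\<infinity>m. cmod (d1_coeff (F (\<Phi> p)) m))\<^sup>2 \<le> lattice_sum k * ?E p"
      by (rule d1_coeff_l1_sq_le[OF k sqrt_sob_weight_mult_le_op_norm[OF \<Phi> F]])
  qed
  also have "\<dots> = lattice_sum k * (\<Sum>p\<in>P. ?E p)" by (simp add: sum_distrib_left)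
  also have "\<dots> \<le> lattice_sum k * ((op_norm r k F)\<^sup>2 * lattice_sum k)"
    by (rule mult_left_mono[OF sum_weighted_coeff_sq_le[OF P] lattice_sum_nonneg])
  finally show ?thesis by (simp add: power2_eq_square algebra_simps)
qed

lemma d1_coeff_l1_sq_summable:
  "(\<lambda>p. (\<Sum>\<^sub>\<infinity>m. cmod (d1_coeff (F (\<Phi> p)) m))\<^sup>2) summable_on {1..}"
proof (rule nonneg_bdd_above_summable_on)
  show "bdd_above (sum (\<lambda>p. (\<Sum>\<^sub>\<infinity>m. cmod (d1_coeff (F (\<Phi> p)) m))\<^sup>2) ` {P. P \<subseteq> {1..} \<and> finite P})"
  proof (rule bdd_aboveI)
    fix y assume "y \<in> sum (\<lambda>p. (\<Sum>\<^sub>\<infinity>m. cmod (d1_coeff (F (\<Phi> p)) m))\<^sup>2) ` {P. P \<subseteq> {1..} \<and> finite P}"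
    then obtain P where "P \<subseteq> {1..}" "finite P"
      and "y = (\<Sum>p\<in>P. (\<Sum>\<^sub>\<infinity>m. cmod (d1_coeff (F (\<Phi> p)) m))\<^sup>2)" by blast
    then show "y \<le> (op_norm r k F)\<^sup>2 * (lattice_sum k)\<^sup>2" using sum_d1_coeff_l1_sq_le by simp
  qed
qed simp

lemma infsum_d1_coeff_l1_sq_le:
  "(\<Sum>\<^sub>\<infinity>p\<in>{1..}. (\<Sum>\<^sub>\<infinity>m. cmod (d1_coeff (F (\<Phi> p)) m))\<^sup>2) \<le> (op_norm r k F)\<^sup>2 * (lattice_sum k)\<^sup>2"
  by (rule infsum_le_finite_sums[OF d1_coeff_l1_sq_summable], rule sum_d1_coeff_l1_sq_le)

end

section \<open>The coefficients \<open>c\<^sub>n\<close>\<close>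

lemma dtheta1_eq_infsum_cis:
  "dtheta1 f x y = (\<Sum>\<^sub>\<infinity>m. d1_coeff f m * (cis (real_of_int (fst m) * x) * cis (real_of_int (snd m) * y)))"
  unfolding dtheta1_def d1_coeff_def
  by (rule infsum_cong) (simp add: cis_conv_exp distrib_left exp_add mult.assoc)

lemma norm_sum_kern_le:
  fixes a b c d :: "'x \<Rightarrow> real" and co :: "'x \<Rightarrow> complex"
  assumes k: "k > 3" and \<Phi>: "complete_orthonormal_system r \<Phi>" and F: "bounded_linear_op r k F"
    and I: "finite I"
    and M: "\<And>m m'. norm (\<Sum>x\<in>I. co x * (cis (real_of_int (fst m) * a x) * cis (real_of_int (snd m) * b x))
                        * cnj (cis (real_of_int (fst m') * c x) * cis (real_of_int (snd m') * d x))) \<le> M"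
  shows "norm (\<Sum>x\<in>I. co x * kern \<Phi> F (a x) (b x) (c x) (d x))
    \<le> M * ((op_norm r k F)\<^sup>2 * (lattice_sum k)\<^sup>2)"
proof -
  define wave where "wave = (\<lambda>v w (x :: 'x) (m :: int \<times> int). cis (real_of_int (fst m) * v x) * cis (real_of_int (snd m) * w x))"
  have M_nonneg: "0 \<le> M" using M[of undefined undefined] norm_ge_zero order_trans by blast
  have summable: "(\<lambda>m. cmod (d1_coeff (F (\<Phi> p)) m)) summable_on UNIV" if "p \<in> {1..}" for p
  proof -
    have "p \<ge> 1" using that by simp
    then show ?thesis by (rule d1_coeff_abs_summable[OF k sqrt_sob_weight_mult_le_op_norm[OF \<Phi> F]])
  qed
  have "kern \<Phi> F (a x) (b x) (c x) (d x) = (\<Sum>\<^sub>\<infinity>p\<in>{1..}. (\<Sum>\<^sub>\<infinity>m. d1_coeff (F (\<Phi> p)) m * wave a b x m)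
      * cnj (\<Sum>\<^sub>\<infinity>m. d1_coeff (F (\<Phi> p)) m * wave c d x m))" for x
    unfolding kern_def dtheta1_eq_infsum_cis wave_def ..
  then have "norm (\<Sum>x\<in>I. co x * kern \<Phi> F (a x) (b x) (c x) (d x))
      = norm (\<Sum>x\<in>I. co x * (\<Sum>\<^sub>\<infinity>p\<in>{1..}. (\<Sum>\<^sub>\<infinity>m. d1_coeff (F (\<Phi> p)) m * wave a b x m)
          * cnj (\<Sum>\<^sub>\<infinity>m. d1_coeff (F (\<Phi> p)) m * wave c d x m)))"
    by simp
  also have "\<dots> \<le> M * (\<Sum>\<^sub>\<infinity>p\<in>{1..}. (\<Sum>\<^sub>\<infinity>m. cmod (d1_coeff (F (\<Phi> p)) m))\<^sup>2)"
    by (rule norm_sum_infsum_pairs_le[OF I summable d1_coeff_l1_sq_summable[OF k \<Phi> F]])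
       (use M in \<open>simp_all add: wave_def norm_mult\<close>)
  also have "\<dots> \<le> M * ((op_norm r k F)\<^sup>2 * (lattice_sum k)\<^sup>2)"
    by (rule mult_left_mono[OF infsum_d1_coeff_l1_sq_le[OF k \<Phi> F] M_nonneg])
  finally show ?thesis .
qed

lemma sum_cube: "(\<Sum>x\<in>{..<n}\<times>{..<n}\<times>{..<n}. f x) = (\<Sum>i<n. \<Sum>j<n. \<Sum>k<n. f (i, j, k))"
  by (simp add: sum.cartesian_product)

lemma cmod_cube_average_le:
  fixes Z :: complex
  assumes "n > 0" "cmod Z \<le> 8 * (real n ^ 3 * S) * B"
  shows "cmod ((1 / of_nat n ^ 3) * Z) \<le> 8 * B * S"
  using assms by (simp add: norm_mult norm_divide norm_power pos_divide_le_eq algebra_simps)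

lemma norm_c_ij_ik_le:
  assumes k: "k > 3" and \<Phi>: "complete_orthonormal_system r \<Phi>" and F: "bounded_linear_op r k F"
    and n: "n > 0"
  shows "cmod (c_ij_ik n pn \<xi> \<Phi> F u) \<le> 8 * ((op_norm r k F)\<^sup>2 * (lattice_sum k)\<^sup>2) * S_ij_ik n pn \<xi>"
proof -
  define a where "a = (\<lambda>i j k. xihat pn \<xi> i j * xihat pn \<xi> i k)"
  let ?co = "\<lambda>(i, j, k). complex_of_real (a i j k)"
  let ?Z = "\<Sum>x\<in>{..<n}\<times>{..<n}\<times>{..<n}. ?co x *
    kern \<Phi> F ((\<lambda>(i, j, k). u i) x) ((\<lambda>(i, j, k). u j) x) ((\<lambda>(i, j, k). u i) x) ((\<lambda>(i, j, k). u k) x)"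
  have "cmod ?Z \<le> 8 * (real n ^ 3 * sign_norm n a) * ((op_norm r k F)\<^sup>2 * (lattice_sum k)\<^sup>2)"
  proof (rule norm_sum_kern_le[OF k \<Phi> F finite_SigmaI])
    fix m m' :: "int \<times> int"
    let ?e = "\<lambda>m v. cis (real_of_int m * v)"
    have "(\<Sum>x\<in>{..<n}\<times>{..<n}\<times>{..<n}. ?co x * (?e (fst m) ((\<lambda>(i, j, k). u i) x) * ?e (snd m) ((\<lambda>(i, j, k). u j) x))
          * cnj (?e (fst m') ((\<lambda>(i, j, k). u i) x) * ?e (snd m') ((\<lambda>(i, j, k). u k) x)))
        = (\<Sum>i<n. \<Sum>j<n. \<Sum>k<n. complex_of_real (a i j k) * (?e (fst m) (u i) * cnj (?e (fst m') (u i)))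
            * ?e (snd m) (u j) * cnj (?e (snd m') (u k)))" (is "?lhs = _")
      unfolding sum_cube by (simp add: ac_simps)
    also have "norm \<dots> \<le> 8 * (real n ^ 3 * sign_norm n a)"
      by (rule complex_trilinear_form_le_sign_norm[OF n]) (simp_all add: norm_mult)
    finally show "norm ?lhs \<le> 8 * (real n ^ 3 * sign_norm n a)" .
  qed simp_all
  moreover have "c_ij_ik n pn \<xi> \<Phi> F u = (1 / of_nat n ^ 3) * ?Z"
    unfolding c_ij_ik_def sum_cube a_def by simp
  ultimately show ?thesis
    using cmod_cube_average_le[OF n] by (simp add: S_ij_ik_eq_sign_norm a_def)
qed

lemma norm_c_ik_jk_le:
  assumes k: "k > 3" and \<Phi>: "complete_orthonormal_system r \<Phi>" and F: "bounded_linear_op r k F"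
    and n: "n > 0"
  shows "cmod (c_ik_jk n pn \<xi> \<Phi> F u) \<le> 8 * ((op_norm r k F)\<^sup>2 * (lattice_sum k)\<^sup>2) * S_ik_jk n pn \<xi>"
proof -
  define a where "a = (\<lambda>i j k. xihat pn \<xi> i k * xihat pn \<xi> j k)"
  let ?co = "\<lambda>(i, j, k). complex_of_real (a i j k)"
  let ?Z = "\<Sum>x\<in>{..<n}\<times>{..<n}\<times>{..<n}. ?co x *
    kern \<Phi> F ((\<lambda>(i, j, k). u i) x) ((\<lambda>(i, j, k). u k) x) ((\<lambda>(i, j, k). u j) x) ((\<lambda>(i, j, k). u k) x)"
  have "cmod ?Z \<le> 8 * (real n ^ 3 * sign_norm n a) * ((op_norm r k F)\<^sup>2 * (lattice_sum k)\<^sup>2)"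
  proof (rule norm_sum_kern_le[OF k \<Phi> F finite_SigmaI])
    fix m m' :: "int \<times> int"
    let ?e = "\<lambda>m v. cis (real_of_int m * v)"
    have "(\<Sum>x\<in>{..<n}\<times>{..<n}\<times>{..<n}. ?co x * (?e (fst m) ((\<lambda>(i, j, k). u i) x) * ?e (snd m) ((\<lambda>(i, j, k). u k) x))
          * cnj (?e (fst m') ((\<lambda>(i, j, k). u j) x) * ?e (snd m') ((\<lambda>(i, j, k). u k) x)))
        = (\<Sum>i<n. \<Sum>j<n. \<Sum>k<n. complex_of_real (a i j k) * ?e (fst m) (u i) * cnj (?e (fst m') (u j))
            * (?e (snd m) (u k) * cnj (?e (snd m') (u k))))" (is "?lhs = _")
      unfolding sum_cube by (simp add: ac_simps)
    also have "norm \<dots> \<le> 8 * (real n ^ 3 * sign_norm n a)"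
      by (rule complex_trilinear_form_le_sign_norm[OF n]) (simp_all add: norm_mult)
    finally show "norm ?lhs \<le> 8 * (real n ^ 3 * sign_norm n a)" .
  qed simp_all
  moreover have "c_ik_jk n pn \<xi> \<Phi> F u = (1 / of_nat n ^ 3) * ?Z"
    unfolding c_ik_jk_def sum_cube a_def by simp
  ultimately show ?thesis
    using cmod_cube_average_le[OF n] by (simp add: S_ik_jk_eq_sign_norm a_def)
qed

theorem mainTheorem9:
  fixes k r :: real and \<Phi> :: "nat \<Rightarrow> fourier2" and F :: "fourier2 \<Rightarrow> fourier2"
  assumes "k > 3" and "r > 0"
    and "complete_orthonormal_system r \<Phi>"
    and "bounded_linear_op r k F"
  shows "\<exists>C>0. \<forall>(n::nat) (pn::real) (\<xi>::nat \<Rightarrow> nat \<Rightarrow> real) (u::nat \<Rightarrow> real).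
     n \<ge> 2 \<and> 0 < pn \<and> pn \<le> 1 \<and> (\<forall>i<n. \<forall>j<n. \<xi> i j \<in> {0, 1}) \<longrightarrow>
       cmod (c_ij_ik n pn \<xi> \<Phi> F u) \<le> C * S_ij_ik n pn \<xi> * (op_norm r k F)\<^sup>2 \<and>
       cmod (c_ik_jk n pn \<xi> \<Phi> F u) \<le> C * S_ik_jk n pn \<xi> * (op_norm r k F)\<^sup>2"
proof -
  define C where "C = 8 * (lattice_sum k)\<^sup>2 + 1"
  have weaken: "8 * ((op_norm r k F)\<^sup>2 * (lattice_sum k)\<^sup>2) * S \<le> C * S * (op_norm r k F)\<^sup>2"
    if "0 \<le> S" for S
    using that by (simp add: C_def algebra_simps)
  show ?thesis
  proof (intro exI[of _ C] conjI allI impI)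
    show "C > 0" by (simp add: C_def add_nonneg_pos)
    fix n :: nat and pn :: real and \<xi> :: "nat \<Rightarrow> nat \<Rightarrow> real" and u :: "nat \<Rightarrow> real"
    assume "n \<ge> 2 \<and> 0 < pn \<and> pn \<le> 1 \<and> (\<forall>i<n. \<forall>j<n. \<xi> i j \<in> {0, 1})"
    then have n: "n > 0" by simp
    show "cmod (c_ij_ik n pn \<xi> \<Phi> F u) \<le> C * S_ij_ik n pn \<xi> * (op_norm r k F)\<^sup>2"
      by (rule order_trans[OF norm_c_ij_ik_le[OF assms(1,3,4) n] weaken])
         (simp add: S_ij_ik_eq_sign_norm sign_norm_nonneg)
    show "cmod (c_ik_jk n pn \<xi> \<Phi> F u) \<le> C * S_ik_jk n pn \<xi> * (op_norm r k F)\<^sup>2"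
      by (rule order_trans[OF norm_c_ik_jk_le[OF assms(1,3,4) n] weaken])
         (simp add: S_ik_jk_eq_sign_norm sign_norm_nonneg)
  qed
qed

end
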